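(* Let $T\in B(\mathcal{F})$ be a block-diagonal operator such that $[T,R_i^*]\in\mathcal{S}$ for $1\le i\le d$. Then $T\in\mathcal{C}=C^*(L_1,\ldots,L_d)$.
   Context: $d\ge2$; $\xi_1,\ldots,\xi_d$ is the standard orthonormal basis of $\mathbb{C}^d$. $\mathcal{F}=\bigoplus_{n\ge0}\mathcal{F}_n$ is the full Fock space, $\mathcal{F}_0=\mathbb{C}\Omega$, $\mathcal{F}_n=(\mathbb{C}^d)^{\otimes n}$ with the usual inner product. $L_j\eta=\xi_j\otimes\eta$, $R_j\eta=\eta\otimes\xi_j$ (with $L_j\Omega=R_j\Omega=\xi_j$). $T$ is block-diagonal if $T(\mathcal{F}_n)\subseteq\mathcal{F}_n$ for all $n$. $\mathcal{S}$ is the set of operators $S\in B(\mathcal{F})$ which are band-limited (there is $b\ge0$ with $S(\mathcal{F}_n)\subseteq\bigoplus_{|m-n|\le b}\mathcal{F}_m$ for all $n$) and summable ($\sum_{n\ge0}\|S|_{\mathcal{F}_n}\|<\infty$). *)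

theory Defs
  imports "HOL-Analysis.Analysis"
begin

text \<open>The orthonormal basis vector xi_{i_1} (x) ... (x) xi_{i_n} is indexed by the word
  [i_1,...,i_n] with letters in {0..<d} (indices shifted from 1..d to 0..d-1);
  Omega is indexed by the empty word.
  Operators are functions on such vectors; only their action on the Fock space matters.\<close>

type_synonym vec = "nat list \<Rightarrow> complex"
type_synonym op = "vec \<Rightarrow> vec"

definition words :: "nat \<Rightarrow> nat list set" where
  "words d = {w. set w \<subseteq> {..<d}}"

definition Fock :: "nat \<Rightarrow> vec set" where
  "Fock d = {f. (\<forall>w. w \<notin> words d \<longrightarrow> f w = 0) \<and> (\<lambda>w. (cmod (f w))\<^sup>2) summable_on UNIV}"

definition fnorm :: "vec \<Rightarrow> real" where
  "fnorm f = sqrt (\<Sum>\<^sub>\<infinity>w. (cmod (f w))\<^sup>2)"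

definition Fock_n :: "nat \<Rightarrow> nat \<Rightarrow> vec set" where
  "Fock_n d n = {f \<in> Fock d. \<forall>w. length w \<noteq> n \<longrightarrow> f w = 0}"

definition bounded_op :: "nat \<Rightarrow> op \<Rightarrow> bool" where
  "bounded_op d T \<longleftrightarrow>
     (\<forall>f\<in>Fock d. T f \<in> Fock d) \<and>
     (\<forall>f\<in>Fock d. \<forall>g\<in>Fock d. \<forall>a b.
        T (\<lambda>w. a * f w + b * g w) = (\<lambda>w. a * T f w + b * T g w)) \<and>
     (\<exists>C. \<forall>f\<in>Fock d. fnorm (T f) \<le> C * fnorm f)"

definition opnorm :: "nat \<Rightarrow> op \<Rightarrow> real" where
  "opnorm d T = Sup {fnorm (T f) | f. f \<in> Fock d \<and> fnorm f \<le> 1}"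

definition resnorm :: "nat \<Rightarrow> op \<Rightarrow> nat \<Rightarrow> real" where
  "resnorm d S n = Sup {fnorm (S f) | f. f \<in> Fock_n d n \<and> fnorm f \<le> 1}"

definition op_add :: "op \<Rightarrow> op \<Rightarrow> op" where
  "op_add S T = (\<lambda>f w. S f w + T f w)"

definition op_diff :: "op \<Rightarrow> op \<Rightarrow> op" where
  "op_diff S T = (\<lambda>f w. S f w - T f w)"

definition op_scale :: "complex \<Rightarrow> op \<Rightarrow> op" where
  "op_scale c T = (\<lambda>f w. c * T f w)"

definition commutator :: "op \<Rightarrow> op \<Rightarrow> op" where
  "commutator S T = op_diff (S \<circ> T) (T \<circ> S)"

text \<open>Left creation L_i eta = xi_i (x) eta and its adjoint.\<close>
definition Lop :: "nat \<Rightarrow> op" where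
  "Lop i f = (\<lambda>w. case w of [] \<Rightarrow> 0 | j # v \<Rightarrow> (if j = i then f v else 0))"

definition Lop_adj :: "nat \<Rightarrow> op" where
  "Lop_adj i f = (\<lambda>w. f (i # w))"

text \<open>Right creation R_i eta = eta (x) xi_i and its adjoint R_i^*.\<close>
definition Rop :: "nat \<Rightarrow> op" where
  "Rop i f = (\<lambda>w. if w \<noteq> [] \<and> last w = i then f (butlast w) else 0)"

definition Rop_adj :: "nat \<Rightarrow> op" where
  "Rop_adj i f = (\<lambda>w. f (w @ [i]))"

definition block_diagonal :: "nat \<Rightarrow> op \<Rightarrow> bool" where
  "block_diagonal d T \<longleftrightarrow> (\<forall>n. \<forall>f\<in>Fock_n d n. T f \<in> Fock_n d n)"

definition band_limited :: "nat \<Rightarrow> op \<Rightarrow> bool" where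
  "band_limited d S \<longleftrightarrow> (\<exists>b::nat. \<forall>n. \<forall>f\<in>Fock_n d n. \<forall>w.
       (length w > n + b \<or> length w + b < n) \<longrightarrow> S f w = 0)"

definition classS :: "nat \<Rightarrow> op set" where
  "classS d = {S. bounded_op d S \<and> band_limited d S \<and> summable (\<lambda>n. resnorm d S n)}"

inductive_set star_alg_L :: "nat \<Rightarrow> op set" for d where
  gen_L: "i < d \<Longrightarrow> Lop i \<in> star_alg_L d"
| gen_Ladj: "i < d \<Longrightarrow> Lop_adj i \<in> star_alg_L d"
| add: "S \<in> star_alg_L d \<Longrightarrow> T \<in> star_alg_L d \<Longrightarrow> op_add S T \<in> star_alg_L d"
| scale: "S \<in> star_alg_L d \<Longrightarrow> op_scale c S \<in> star_alg_L d"
| comp: "S \<in> star_alg_L d \<Longrightarrow> T \<in> star_alg_L d \<Longrightarrow> S \<circ> T \<in> star_alg_L d"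

definition CstarL :: "nat \<Rightarrow> op set" where
  "CstarL d = {T. bounded_op d T \<and>
     (\<forall>e>0. \<exists>P\<in>star_alg_L d. opnorm d (op_diff T P) < e)}"

end

theory Submission
  imports Defs "HOL-Library.Function_Algebras"
begin

text \<open>The matrix coefficients of T on the levels below k are reproduced exactly by finite
  combinations of the rank-one operators L_u P_\<Omega> L_{u'}^*, where P_\<Omega> = I - \<Sum> L_i L_i^* is the
  vacuum projection. On a level n \<ge> k we use instead the operators L_u L_{u'}^* with |u| = |u'| = k,
  which let the level-k block of T act on the first k letters of a word and leave the remaining
  n - k letters alone. For a block-diagonal T this is exactly right when T commutes with all R_i^*;
  in general the error on level k + j telescopes, letter by letter, into commutators [T, R_i^*]
  restricted to the levels k + 1, ..., k + j. Hence the norm of the error is at most the tail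
  \<Sum>_{m>k} \<Sum>_i \<parallel>[T, R_i^*]|_{F_m}\<parallel> of a convergent series, and it tends to zero as k grows.\<close>

section \<open>Vectors of the Fock space\<close>

definition level_words :: "nat \<Rightarrow> nat \<Rightarrow> nat list set" where
  "level_words d n = {w. length w = n \<and> set w \<subseteq> {..<d}}"

lemma mem_level_words: "w \<in> level_words d n \<longleftrightarrow> length w = n \<and> set w \<subseteq> {..<d}"
  unfolding level_words_def by auto

lemma finite_level_words: "finite (level_words d n)"
proof -
  have "finite {xs. set xs \<subseteq> {..<d} \<and> length xs = n}"
    by (rule finite_lists_length_eq) simp
  then show ?thesis unfolding level_words_def by (simp add: conj_commute)
qed

lemma level_words_subset_words: "level_words d n \<subseteq> words d"
  unfolding level_words_def words_def by auto

lemma level_words_Suc: "level_words d (Suc n) = (\<lambda>(w, i). w @ [i]) ` (level_words d n \<times> {..<d})"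
proof
  show "level_words d (Suc n) \<subseteq> (\<lambda>(w, i). w @ [i]) ` (level_words d n \<times> {..<d})"
  proof
    fix x assume x: "x \<in> level_words d (Suc n)"
    then have "x \<noteq> []" by (auto simp: mem_level_words)
    then have "x = butlast x @ [last x]" by simp
    moreover have "last x < d"
      using x last_in_set[OF \<open>x \<noteq> []\<close>] by (auto simp: mem_level_words)
    moreover have "butlast x \<in> level_words d n"
      using x by (auto simp: mem_level_words dest: in_set_butlastD)
    ultimately show "x \<in> (\<lambda>(w, i). w @ [i]) ` (level_words d n \<times> {..<d})" by force
  qed
qed (auto simp: mem_level_words)

lemma fnorm_nonneg: "fnorm f \<ge> 0"
  unfolding fnorm_def by (simp add: infsum_nonneg)

lemma Fock_vanishes: "f \<in> Fock d \<Longrightarrow> w \<notin> words d \<Longrightarrow> f w = 0"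
  unfolding Fock_def by auto

lemma Fock_finite_support:
  assumes "finite A" "A \<subseteq> words d" "\<And>w. w \<notin> A \<Longrightarrow> f w = 0"
  shows "f \<in> Fock d"
proof -
  have "(\<lambda>w. (cmod (f w))\<^sup>2) summable_on A" using assms(1) by simp
  then have "(\<lambda>w. (cmod (f w))\<^sup>2) summable_on UNIV"
    by (rule summable_on_cong_neutral[THEN iffD1, rotated -1]) (use assms(3) in auto)
  then show ?thesis unfolding Fock_def using assms by auto
qed

lemma fnorm_finite_support:
  assumes "finite A" "\<And>w. w \<notin> A \<Longrightarrow> f w = 0"
  shows "fnorm f = L2_set (\<lambda>w. cmod (f w)) A"
proof -
  have "(\<Sum>\<^sub>\<infinity>w. (cmod (f w))\<^sup>2) = (\<Sum>\<^sub>\<infinity>w\<in>A. (cmod (f w))\<^sup>2)"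
    by (rule infsum_cong_neutral) (use assms(2) in auto)
  also have "\<dots> = (\<Sum>w\<in>A. (cmod (f w))\<^sup>2)" using assms(1) by simp
  finally show ?thesis unfolding fnorm_def L2_set_def by simp
qed

lemma L2_set_le_fnorm:
  assumes "f \<in> Fock d" "finite A"
  shows "L2_set (\<lambda>w. cmod (f w)) A \<le> fnorm f"
proof -
  have "(\<lambda>w. (cmod (f w))\<^sup>2) summable_on UNIV" using assms(1) unfolding Fock_def by auto
  then have "(\<Sum>w\<in>A. (cmod (f w))\<^sup>2) \<le> (\<Sum>\<^sub>\<infinity>w. (cmod (f w))\<^sup>2)"
    by (rule finite_sum_le_infsum[OF _ assms(2)]) auto
  then show ?thesis unfolding L2_set_def fnorm_def by simp
qed

lemma norm_le_fnorm: "f \<in> Fock d \<Longrightarrow> cmod (f w) \<le> fnorm f"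
  using L2_set_le_fnorm[of f d "{w}"] by simp

lemma fnorm_scale: "fnorm (\<lambda>w. c * f w) = cmod c * fnorm f"
proof -
  have "(\<Sum>\<^sub>\<infinity>w. (cmod (c * f w))\<^sup>2) = (\<Sum>\<^sub>\<infinity>w. (cmod c)\<^sup>2 * (cmod (f w))\<^sup>2)"
    by (simp add: norm_mult power_mult_distrib)
  also have "\<dots> = (cmod c)\<^sup>2 * (\<Sum>\<^sub>\<infinity>w. (cmod (f w))\<^sup>2)" by (rule infsum_cmult_right')
  finally show ?thesis unfolding fnorm_def by (simp add: real_sqrt_mult)
qed

lemma fnorm_zero: "fnorm (\<lambda>w. 0) = 0"
  unfolding fnorm_def by simp

lemma Fock_linear:
  assumes "f \<in> Fock d" "g \<in> Fock d"
  shows "(\<lambda>w. a * f w + b * g w) \<in> Fock d"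
proof -
  have sf: "(\<lambda>w. (cmod (f w))\<^sup>2) summable_on UNIV" and sg: "(\<lambda>w. (cmod (g w))\<^sup>2) summable_on UNIV"
    using assms unfolding Fock_def by auto
  have bound: "(cmod (a * f w + b * g w))\<^sup>2
      \<le> 2 * (cmod a)\<^sup>2 * (cmod (f w))\<^sup>2 + 2 * (cmod b)\<^sup>2 * (cmod (g w))\<^sup>2" for w
  proof -
    have "cmod (a * f w + b * g w) \<le> cmod a * cmod (f w) + cmod b * cmod (g w)"
      by (metis norm_mult norm_triangle_ineq)
    then have "(cmod (a * f w + b * g w))\<^sup>2 \<le> (cmod a * cmod (f w) + cmod b * cmod (g w))\<^sup>2"
      by (simp add: power_mono)
    also have "\<dots> \<le> 2 * (cmod a * cmod (f w))\<^sup>2 + 2 * (cmod b * cmod (g w))\<^sup>2"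
      by (smt (verit) power2_diff zero_le_power2 power2_sum)
    finally show ?thesis by (simp add: power_mult_distrib)
  qed
  have "(\<lambda>w. 2 * (cmod a)\<^sup>2 * (cmod (f w))\<^sup>2 + 2 * (cmod b)\<^sup>2 * (cmod (g w))\<^sup>2) summable_on UNIV"
    by (intro summable_on_add summable_on_cmult_right sf sg)
  then have "(\<lambda>w. (cmod (a * f w + b * g w))\<^sup>2) summable_on UNIV"
    by (rule summable_on_comparison_test) (use bound in auto)
  then show ?thesis using assms unfolding Fock_def by auto
qed

lemma Fock_zero: "(\<lambda>w. 0) \<in> Fock d"
  by (rule Fock_finite_support[of "{}"]) auto

lemma Fock_add: "f \<in> Fock d \<Longrightarrow> g \<in> Fock d \<Longrightarrow> (\<lambda>w. f w + g w) \<in> Fock d"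
  using Fock_linear[of f d g 1 1] by simp

lemma Fock_diff: "f \<in> Fock d \<Longrightarrow> g \<in> Fock d \<Longrightarrow> (\<lambda>w. f w - g w) \<in> Fock d"
  using Fock_linear[of f d g 1 "-1"] by simp

lemma Fock_scale: "f \<in> Fock d \<Longrightarrow> (\<lambda>w. a * f w) \<in> Fock d"
  using Fock_linear[of f d "\<lambda>w. 0" a 0] Fock_zero by simp

lemma Fock_sum:
  "finite A \<Longrightarrow> (\<And>x. x \<in> A \<Longrightarrow> \<phi> x \<in> Fock d) \<Longrightarrow> (\<lambda>w. \<Sum>x\<in>A. \<phi> x w) \<in> Fock d"
  by (induction A rule: finite_induct) (auto simp: Fock_zero intro: Fock_add)

lemma Fock_n_Fock: "f \<in> Fock_n d n \<Longrightarrow> f \<in> Fock d"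
  unfolding Fock_n_def by auto

lemma Fock_n_vanishes: "f \<in> Fock_n d n \<Longrightarrow> w \<notin> level_words d n \<Longrightarrow> f w = 0"
  unfolding Fock_n_def Fock_def level_words_def words_def by auto

lemma Fock_n_zero: "(\<lambda>w. 0) \<in> Fock_n d n"
  unfolding Fock_n_def using Fock_zero by auto

lemma Fock_n_scale: "f \<in> Fock_n d n \<Longrightarrow> (\<lambda>w. c * f w) \<in> Fock_n d n"
  using Fock_scale unfolding Fock_n_def by auto

lemma fnorm_Fock_n: "f \<in> Fock_n d n \<Longrightarrow> fnorm f = L2_set (\<lambda>w. cmod (f w)) (level_words d n)"
  by (rule fnorm_finite_support[OF finite_level_words Fock_n_vanishes])

lemma fnorm_eq_0_Fock_n: "f \<in> Fock_n d n \<Longrightarrow> fnorm f = 0 \<Longrightarrow> f = (\<lambda>w. 0)"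
  using Fock_n_vanishes[of f d n] by (auto simp: fnorm_Fock_n L2_set_eq_0_iff[OF finite_level_words])

definition level_proj :: "nat \<Rightarrow> vec \<Rightarrow> vec" where
  "level_proj n f = (\<lambda>w. if length w = n then f w else 0)"

lemma level_proj_Fock_n:
  assumes "f \<in> Fock d"
  shows "level_proj n f \<in> Fock_n d n"
proof -
  have "level_proj n f \<in> Fock d"
    by (rule Fock_finite_support[OF finite_level_words level_words_subset_words, of d n])
       (use assms in \<open>auto simp: level_proj_def level_words_def words_def Fock_def\<close>)
  then show ?thesis unfolding Fock_n_def level_proj_def by auto
qed

lemma fnorm_level_proj:
  assumes "f \<in> Fock d"
  shows "fnorm (level_proj n f) = L2_set (\<lambda>w. cmod (f w)) (level_words d n)"
  unfolding fnorm_Fock_n[OF level_proj_Fock_n[OF assms]]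
  by (rule L2_set_cong) (auto simp: level_proj_def mem_level_words)

lemma fnorm_tail_small:
  assumes "f \<in> Fock d" "e > 0"
  obtains N0 where "\<And>N. N \<ge> N0 \<Longrightarrow> fnorm (\<lambda>w. if length w > N then f w else 0) < e"
proof -
  define g where "g = (\<lambda>w. (cmod (f w))\<^sup>2)"
  have g: "g summable_on UNIV" using assms unfolding Fock_def g_def by auto
  have e2: "e\<^sup>2 / 2 > 0" using assms by simp
  obtain F where F: "finite F" "dist (sum g F) (infsum g UNIV) \<le> e\<^sup>2 / 2"
    using infsum_finite_approximation[OF g e2] by blast
  define N0 where "N0 = Max (insert 0 (length ` F))"
  have "fnorm (\<lambda>w. if length w > N then f w else 0) < e" if "N \<ge> N0" for N
  proof -
    define B where "B = {w::nat list. length w > N}"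
    have FB: "F \<subseteq> UNIV - B"
      using F(1) that by (auto simp: B_def N0_def intro!: Max_ge le_trans[of _ N0 N])
    have gB: "g summable_on B" and gB': "g summable_on (UNIV - B)"
      using summable_on_subset[OF g] by auto
    have "(UNIV - B) \<inter> B = {}" "(UNIV - B) \<union> B = UNIV" by auto
    then have "infsum g UNIV = infsum g (UNIV - B) + infsum g B"
      using infsum_Un_disjoint[OF gB' gB] by simp
    moreover have "sum g F \<le> infsum g (UNIV - B)"
      by (rule finite_sum_le_infsum[OF gB' F(1) FB]) (auto simp: g_def)
    ultimately have "infsum g B \<le> e\<^sup>2 / 2" using F(2) unfolding dist_real_def by linarith
    moreover have "(\<Sum>\<^sub>\<infinity>w. (cmod (if length w > N then f w else 0))\<^sup>2) = infsum g B"
      by (rule infsum_cong_neutral) (auto simp: B_def g_def)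
    ultimately have "(\<Sum>\<^sub>\<infinity>w. (cmod (if length w > N then f w else 0))\<^sup>2) < e\<^sup>2"
      using e2 by linarith
    then have "fnorm (\<lambda>w. if length w > N then f w else 0) < sqrt (e\<^sup>2)"
      unfolding fnorm_def by (simp only: real_sqrt_less_iff)
    then show ?thesis using assms(2) by simp
  qed
  then show ?thesis using that by blast
qed

lemma fnorm_le_levelwise:
  assumes f: "f \<in> Fock d" and g: "\<And>w. w \<notin> words d \<Longrightarrow> g w = 0" and "c \<ge> 0"
    and levels: "\<And>n. L2_set (\<lambda>w. cmod (g w)) (level_words d n)
                      \<le> c * L2_set (\<lambda>w. cmod (f w)) (level_words d n)"
  shows "fnorm g \<le> c * fnorm f"
proof -
  have level_sq: "(\<Sum>w\<in>level_words d n. (cmod (g w))\<^sup>2)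
      \<le> c\<^sup>2 * (\<Sum>w\<in>level_words d n. (cmod (f w))\<^sup>2)" for n
  proof -
    have "(L2_set (\<lambda>w. cmod (g w)) (level_words d n))\<^sup>2
        \<le> (c * L2_set (\<lambda>w. cmod (f w)) (level_words d n))\<^sup>2"
      by (rule power_mono[OF levels]) simp
    then show ?thesis by (simp add: L2_set_def power_mult_distrib sum_nonneg)
  qed
  have finite_sums: "(\<Sum>w\<in>F. (cmod (g w))\<^sup>2) \<le> c\<^sup>2 * (fnorm f)\<^sup>2" if F: "finite F" for F
  proof -
    define N where "N = Max (insert 0 (length ` F))"
    define G where "G = (\<Union>n\<in>{..N}. level_words d n)"
    have G: "finite G" unfolding G_def using finite_level_words by auto
    have disj: "\<forall>i\<in>{..N}. \<forall>j\<in>{..N}. i \<noteq> j \<longrightarrow> level_words d i \<inter> level_words d j = {}"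
      by (auto simp: mem_level_words)
    have outside: "w \<notin> words d" if "w \<in> F - G" for w
      using that F by (auto simp: G_def N_def mem_level_words words_def)
    have "(\<Sum>w\<in>F. (cmod (g w))\<^sup>2) \<le> (\<Sum>w\<in>F \<union> G. (cmod (g w))\<^sup>2)"
      by (rule sum_mono2) (use F G in auto)
    also have "\<dots> = (\<Sum>w\<in>G. (cmod (g w))\<^sup>2)"
      by (rule sum.mono_neutral_right) (use F G outside g in auto)
    also have "\<dots> = (\<Sum>n\<in>{..N}. \<Sum>w\<in>level_words d n. (cmod (g w))\<^sup>2)"
      unfolding G_def by (rule sum.UNION_disjoint) (use finite_level_words disj in auto)
    also have "\<dots> \<le> (\<Sum>n\<in>{..N}. c\<^sup>2 * (\<Sum>w\<in>level_words d n. (cmod (f w))\<^sup>2))"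
      by (rule sum_mono) (rule level_sq)
    also have "\<dots> = c\<^sup>2 * (\<Sum>w\<in>G. (cmod (f w))\<^sup>2)"
      unfolding G_def
      by (subst sum.UNION_disjoint) (use finite_level_words disj in \<open>auto simp: sum_distrib_left\<close>)
    also have "\<dots> \<le> c\<^sup>2 * (fnorm f)\<^sup>2"
      using sqrt_le_D[OF L2_set_le_fnorm[OF f G, unfolded L2_set_def]] by (simp add: mult_left_mono)
    finally show ?thesis .
  qed
  have "(\<Sum>\<^sub>\<infinity>w. (cmod (g w))\<^sup>2) \<le> (c * fnorm f)\<^sup>2"
  proof (cases "(\<lambda>w. (cmod (g w))\<^sup>2) summable_on UNIV")
    case True
    show ?thesis
      by (rule infsum_le_finite_sums[OF True]) (use finite_sums in \<open>auto simp: power_mult_distrib\<close>)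
  qed (simp add: infsum_not_exists)
  then show ?thesis
    unfolding fnorm_def[of g] using \<open>c \<ge> 0\<close> fnorm_nonneg[of f] by (intro real_le_lsqrt) simp_all
qed

lemma L2_set_Times:
  assumes "finite A" "finite B"
  shows "L2_set h (A \<times> B) = L2_set (\<lambda>b. L2_set (\<lambda>a. h (a, b)) A) B"
proof -
  have "(\<Sum>p\<in>A \<times> B. (h p)\<^sup>2) = (\<Sum>a\<in>A. \<Sum>b\<in>B. (h (a, b))\<^sup>2)"
    by (simp add: sum.cartesian_product case_prod_beta)
  also have "\<dots> = (\<Sum>b\<in>B. \<Sum>a\<in>A. (h (a, b))\<^sup>2)"
    by (rule sum.swap)
  also have "\<dots> = (\<Sum>b\<in>B. (L2_set (\<lambda>a. h (a, b)) A)\<^sup>2)"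
    unfolding L2_set_def by (simp add: sum_nonneg)
  finally show ?thesis unfolding L2_set_def[of h] by (simp add: L2_set_def[of _ B])
qed

lemma L2_set_level_words_Suc:
  "L2_set g (level_words d (Suc n))
     = L2_set (\<lambda>i. L2_set (\<lambda>w. g (w @ [i])) (level_words d n)) {..<d}"
proof -
  have "inj_on (\<lambda>(w::nat list, i). w @ [i]) (level_words d n \<times> {..<d})"
    by (auto simp: inj_on_def)
  then have "L2_set g (level_words d (Suc n)) = L2_set (\<lambda>(w, i). g (w @ [i])) (level_words d n \<times> {..<d})"
    unfolding L2_set_def level_words_Suc by (subst sum.reindex) (simp_all add: case_prod_beta)
  then show ?thesis by (simp add: L2_set_Times[OF finite_level_words])
qed

section \<open>Bounded operators\<close>

lemma bounded_op_Fock: "bounded_op d T \<Longrightarrow> f \<in> Fock d \<Longrightarrow> T f \<in> Fock d"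
  unfolding bounded_op_def by auto

lemma bounded_op_linear:
  "bounded_op d T \<Longrightarrow> f \<in> Fock d \<Longrightarrow> g \<in> Fock d \<Longrightarrow>
   T (\<lambda>w. a * f w + b * g w) = (\<lambda>w. a * T f w + b * T g w)"
  unfolding bounded_op_def by blast

lemma bounded_op_zero: "bounded_op d T \<Longrightarrow> T (\<lambda>w. 0) = (\<lambda>w. 0)"
  using bounded_op_linear[OF _ Fock_zero Fock_zero, of d T 0 0] by simp

lemma bounded_op_scale: "bounded_op d T \<Longrightarrow> f \<in> Fock d \<Longrightarrow> T (\<lambda>w. a * f w) = (\<lambda>w. a * T f w)"
  using bounded_op_linear[OF _ _ Fock_zero, of d T f a 0] bounded_op_zero[of d T] by simp

lemma bounded_op_diff:
  "bounded_op d T \<Longrightarrow> f \<in> Fock d \<Longrightarrow> g \<in> Fock d \<Longrightarrow> T (\<lambda>w. f w - g w) = (\<lambda>w. T f w - T g w)"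
  using bounded_op_linear[of d T f g 1 "-1"] by simp

lemma bounded_op_lincomb:
  assumes T: "bounded_op d T"
  shows "finite A \<Longrightarrow> (\<And>x. x \<in> A \<Longrightarrow> \<phi> x \<in> Fock d) \<Longrightarrow>
    T (\<lambda>w. \<Sum>x\<in>A. a x * \<phi> x w) = (\<lambda>w. \<Sum>x\<in>A. a x * T (\<phi> x) w)"
proof (induction A rule: finite_induct)
  case empty
  then show ?case using bounded_op_zero[OF T] by simp
next
  case (insert x F)
  have F: "(\<lambda>w. \<Sum>x\<in>F. a x * \<phi> x w) \<in> Fock d"
    using insert by (intro Fock_sum Fock_scale) auto
  have "T (\<lambda>w. \<Sum>x\<in>insert x F. a x * \<phi> x w) = T (\<lambda>w. a x * \<phi> x w + 1 * (\<Sum>x\<in>F. a x * \<phi> x w))"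
    using insert by simp
  also have "\<dots> = (\<lambda>w. a x * T (\<phi> x) w + 1 * T (\<lambda>w. \<Sum>x\<in>F. a x * \<phi> x w) w)"
    by (rule bounded_op_linear[OF T]) (use insert F in auto)
  finally show ?case using insert by simp
qed

lemma bounded_op_sum:
  "bounded_op d T \<Longrightarrow> finite A \<Longrightarrow> (\<And>x. x \<in> A \<Longrightarrow> \<phi> x \<in> Fock d) \<Longrightarrow>
   T (\<lambda>w. \<Sum>x\<in>A. \<phi> x w) = (\<lambda>w. \<Sum>x\<in>A. T (\<phi> x) w)"
  using bounded_op_lincomb[of d T A \<phi> "\<lambda>_. 1"] by (simp only: mult_1)

lemma bounded_op_bound:
  assumes "bounded_op d T"
  obtains C where "C \<ge> 0" "\<And>f. f \<in> Fock d \<Longrightarrow> fnorm (T f) \<le> C * fnorm f"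
proof -
  obtain C where C: "\<forall>f\<in>Fock d. fnorm (T f) \<le> C * fnorm f"
    using assms unfolding bounded_op_def by blast
  have "fnorm (T f) \<le> max C 0 * fnorm f" if "f \<in> Fock d" for f
  proof -
    have "C * fnorm f \<le> max C 0 * fnorm f" by (rule mult_right_mono) (auto simp: fnorm_nonneg)
    then show ?thesis using C that by (meson order_trans)
  qed
  then show ?thesis using that[of "max C 0"] by auto
qed

lemma opnorm_le:
  assumes "c \<ge> 0" "\<And>f. f \<in> Fock d \<Longrightarrow> fnorm (S f) \<le> c * fnorm f"
  shows "opnorm d S \<le> c"
  unfolding opnorm_def
proof (rule cSup_least)
  show "{fnorm (S f) |f. f \<in> Fock d \<and> fnorm f \<le> 1} \<noteq> {}"
    using Fock_zero fnorm_zero by fastforce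
next
  fix x assume "x \<in> {fnorm (S f) |f. f \<in> Fock d \<and> fnorm f \<le> 1}"
  then obtain f where f: "f \<in> Fock d" "fnorm f \<le> 1" and x: "x = fnorm (S f)" by blast
  have "x \<le> c * fnorm f" using assms(2)[OF f(1)] x by simp
  also have "\<dots> \<le> c" using f(2) assms(1) by (rule mult_left_le)
  finally show "x \<le> c" .
qed

lemma resnorm_bdd_above:
  assumes "bounded_op d S"
  shows "bdd_above {fnorm (S f) | f. f \<in> Fock_n d n \<and> fnorm f \<le> 1}"
proof -
  obtain C where C: "C \<ge> 0" "\<And>f. f \<in> Fock d \<Longrightarrow> fnorm (S f) \<le> C * fnorm f"
    using bounded_op_bound[OF assms] by blast
  have "fnorm (S f) \<le> C" if "f \<in> Fock_n d n" "fnorm f \<le> 1" for f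
    using C(2)[OF Fock_n_Fock[OF that(1)]] that(2) C(1) by (meson mult_left_le order_trans)
  then show ?thesis unfolding bdd_above_def by blast
qed

lemma resnorm_upper: "bounded_op d S \<Longrightarrow> f \<in> Fock_n d n \<Longrightarrow> fnorm f \<le> 1 \<Longrightarrow> fnorm (S f) \<le> resnorm d S n"
  unfolding resnorm_def by (rule cSup_upper[OF _ resnorm_bdd_above]) auto

lemma resnorm_nonneg: "bounded_op d S \<Longrightarrow> resnorm d S n \<ge> 0"
  using resnorm_upper[OF _ Fock_n_zero, of d S n] fnorm_nonneg[of "S (\<lambda>w. 0)"]
  by (simp add: fnorm_zero)

lemma resnorm_bound:
  assumes S: "bounded_op d S" and f: "f \<in> Fock_n d n"
  shows "fnorm (S f) \<le> resnorm d S n * fnorm f"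
proof (cases "fnorm f = 0")
  case True
  then show ?thesis using fnorm_eq_0_Fock_n[OF f] bounded_op_zero[OF S] fnorm_zero by simp
next
  case False
  then have pos: "fnorm f > 0" using fnorm_nonneg[of f] by simp
  define c where "c = complex_of_real (1 / fnorm f)"
  have c: "cmod c = 1 / fnorm f" using pos by (simp add: c_def norm_divide)
  have "fnorm (S (\<lambda>w. c * f w)) \<le> resnorm d S n"
    using pos by (intro resnorm_upper[OF S Fock_n_scale[OF f]]) (simp add: fnorm_scale c)
  moreover have "fnorm (S (\<lambda>w. c * f w)) = fnorm (S f) / fnorm f"
    by (simp add: bounded_op_scale[OF S Fock_n_Fock[OF f]] fnorm_scale c)
  ultimately show ?thesis using pos by (simp add: divide_le_eq)
qed

lemma block_diagonal_level_proj:
  assumes T: "bounded_op d T" "block_diagonal d T" and f: "f \<in> Fock d" and w: "length w = n"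
  shows "T f w = T (level_proj n f) w"
proof -
  obtain C where C: "C \<ge> 0" "\<And>f. f \<in> Fock d \<Longrightarrow> fnorm (T f) \<le> C * fnorm f"
    using bounded_op_bound[OF T(1)] by blast
  have "cmod (T f w - T (level_proj n f) w) \<le> 0 + e" if e: "e > 0" for e
  proof -
    have "e / (C + 1) > 0" using e C(1) by simp
    then obtain N0 where N0: "\<And>N. N \<ge> N0 \<Longrightarrow> fnorm (\<lambda>w. if length w > N then f w else 0) < e / (C + 1)"
      using fnorm_tail_small[OF f] by blast
    define N where "N = max N0 n"
    define q where "q = (\<lambda>x. \<Sum>m\<in>{..N}. level_proj m f x)"
    define t where "t = (\<lambda>w. if length w > N then f w else 0)"
    have q: "q \<in> Fock d"
      unfolding q_def by (intro Fock_sum Fock_n_Fock[OF level_proj_Fock_n[OF f]]) auto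
    have t: "t = (\<lambda>x. f x - q x)"
      unfolding t_def q_def level_proj_def by (auto simp: if_distrib cong: if_cong)
    have t_Fock: "t \<in> Fock d" using Fock_diff[OF f q] t by simp
    have "T q w = (\<Sum>m\<in>{..N}. T (level_proj m f) w)"
      unfolding q_def
      by (subst bounded_op_sum[OF T(1)]) (auto intro: Fock_n_Fock[OF level_proj_Fock_n[OF f]])
    also have "\<dots> = (\<Sum>m\<in>{..N}. if m = n then T (level_proj n f) w else 0)"
    proof (intro sum.cong refl)
      fix m
      have "T (level_proj m f) \<in> Fock_n d m"
        using T(2) level_proj_Fock_n[OF f] unfolding block_diagonal_def by blast
      then show "T (level_proj m f) w = (if m = n then T (level_proj n f) w else 0)"
        using w by (auto simp: Fock_n_def)
    qed
    also have "\<dots> = T (level_proj n f) w" by (simp add: N_def)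
    finally have "T f w - T (level_proj n f) w = T t w"
      using bounded_op_diff[OF T(1) f q] t by simp
    then have "cmod (T f w - T (level_proj n f) w) \<le> fnorm (T t)"
      using norm_le_fnorm[OF bounded_op_Fock[OF T(1) t_Fock]] by simp
    also have "\<dots> \<le> C * fnorm t" using C(2)[OF t_Fock] .
    also have "\<dots> \<le> C * (e / (C + 1))"
      using N0[of N] C(1) unfolding t_def N_def by (intro mult_left_mono) simp_all
    also have "\<dots> \<le> e" using C(1) e by (simp add: field_simps)
    finally show ?thesis by simp
  qed
  then have "cmod (T f w - T (level_proj n f) w) \<le> 0" by (rule field_le_epsilon)
  then show ?thesis by simp
qed

section \<open>Approximating operators in the algebra generated by the L_i\<close>

lemma id_in_star_alg_L: "0 < d \<Longrightarrow> id \<in> star_alg_L d"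
proof -
  assume "0 < d"
  then have "Lop_adj 0 \<circ> Lop 0 \<in> star_alg_L d"
    by (intro star_alg_L.comp star_alg_L.gen_L star_alg_L.gen_Ladj)
  moreover have "Lop_adj 0 \<circ> Lop 0 = id"
    by (simp add: Lop_def Lop_adj_def fun_eq_iff)
  ultimately show ?thesis by (simp only:)
qed

lemma zero_in_star_alg_L: "0 < d \<Longrightarrow> 0 \<in> star_alg_L d"
proof -
  assume "0 < d"
  then have "op_scale 0 id \<in> star_alg_L d" by (intro star_alg_L.scale id_in_star_alg_L)
  moreover have "op_scale 0 id = 0" by (simp add: op_scale_def fun_eq_iff)
  ultimately show ?thesis by (simp only:)
qed

lemma op_add_eq_plus: "op_add S T = S + T"
  by (auto simp: op_add_def fun_eq_iff)

lemma sum_in_star_alg_L: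
  assumes "0 < d"
  shows "finite A \<Longrightarrow> (\<And>x. x \<in> A \<Longrightarrow> F x \<in> star_alg_L d) \<Longrightarrow> sum F A \<in> star_alg_L d"
proof (induction A rule: finite_induct)
  case empty
  show ?case unfolding sum.empty by (rule zero_in_star_alg_L[OF assms])
next
  case (insert x A)
  then have "op_add (F x) (sum F A) \<in> star_alg_L d" by (intro star_alg_L.add) auto
  then show ?case by (simp only: sum.insert[OF insert(1,2)] op_add_eq_plus)
qed

lemma sum_op_apply: "(sum F A :: op) f w = (\<Sum>x\<in>A. F x f w)"
  by (induction A rule: infinite_finite_induct) auto

fun Lword :: "nat list \<Rightarrow> op" where
  "Lword [] = id"
| "Lword (i # u) = Lop i \<circ> Lword u"

fun Lword_adj :: "nat list \<Rightarrow> op" where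
  "Lword_adj [] = id"
| "Lword_adj (i # u) = Lword_adj u \<circ> Lop_adj i"

lemma Lword_apply: "Lword u f w = (if take (length u) w = u then f (drop (length u) w) else 0)"
  by (induction u arbitrary: w) (auto simp: Lop_def split: list.split)

lemma Lword_adj_apply: "Lword_adj u f x = f (u @ x)"
  by (induction u arbitrary: f) (auto simp: Lop_adj_def)

lemma Lword_in_star_alg_L: "0 < d \<Longrightarrow> set u \<subseteq> {..<d} \<Longrightarrow> Lword u \<in> star_alg_L d"
  by (induction u) (auto intro: id_in_star_alg_L star_alg_L.comp star_alg_L.gen_L)

lemma Lword_adj_in_star_alg_L: "0 < d \<Longrightarrow> set u \<subseteq> {..<d} \<Longrightarrow> Lword_adj u \<in> star_alg_L d"
  by (induction u) (auto intro: id_in_star_alg_L star_alg_L.comp star_alg_L.gen_Ladj)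

definition vacuum_proj :: "nat \<Rightarrow> op" where
  "vacuum_proj d = op_add id (op_scale (-1) (\<Sum>i\<in>{..<d}. Lop i \<circ> Lop_adj i))"

lemma vacuum_proj_in_star_alg_L: "0 < d \<Longrightarrow> vacuum_proj d \<in> star_alg_L d"
  unfolding vacuum_proj_def
  by (intro star_alg_L.add star_alg_L.scale id_in_star_alg_L sum_in_star_alg_L)
     (auto intro: star_alg_L.comp star_alg_L.gen_L star_alg_L.gen_Ladj)

lemma vacuum_proj_apply: "vacuum_proj d g x = (if x = [] then g [] else if hd x < d then 0 else g x)"
proof (cases x)
  case Nil
  then show ?thesis by (simp add: vacuum_proj_def op_add_def op_scale_def sum_op_apply Lop_def)
next
  case (Cons j v)
  have "(\<Sum>i\<in>{..<d}. (Lop i \<circ> Lop_adj i) g x) = (\<Sum>i\<in>{..<d}. if j = i then g x else 0)"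
    using Cons by (intro sum.cong) (auto simp: Lop_def Lop_adj_def)
  also have "\<dots> = (if j < d then g x else 0)" by simp
  finally show ?thesis
    unfolding vacuum_proj_def op_add_def op_scale_def using Cons by (simp add: sum_op_apply)
qed

lemma rank_one_apply:
  assumes "f \<in> Fock d"
  shows "Lword u (vacuum_proj d (Lword_adj u' f)) w = (if w = u then f u' else 0)"
proof (cases "take (length u) w = u")
  case True
  then have w: "w = u @ drop (length u) w" by (metis append_take_drop_id)
  show ?thesis
  proof (cases "drop (length u) w")
    case Nil
    then show ?thesis using True by (simp add: Lword_apply vacuum_proj_apply Lword_adj_apply)
  next
    case (Cons j v)
    have "f (u' @ j # v) = 0" if "\<not> j < d"
      by (rule Fock_vanishes[OF assms]) (use that in \<open>auto simp: words_def\<close>)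
    moreover have "w \<noteq> u" using w Cons by auto
    ultimately show ?thesis using True Cons by (simp add: Lword_apply vacuum_proj_apply Lword_adj_apply)
  qed
qed (auto simp: Lword_apply)

lemma shift_apply: "Lword u (Lword_adj u' f) w = (if take (length u) w = u then f (u' @ drop (length u) w) else 0)"
  by (simp add: Lword_apply Lword_adj_apply)

definition basis_vec :: "nat list \<Rightarrow> vec" where
  "basis_vec u = (\<lambda>x. if x = u then 1 else 0)"

definition matrix_coeff :: "op \<Rightarrow> nat list \<Rightarrow> nat list \<Rightarrow> complex" where
  "matrix_coeff T u u' = T (basis_vec u') u"

definition approx_op :: "nat \<Rightarrow> op \<Rightarrow> nat \<Rightarrow> op" where
  "approx_op d T k =
     (\<Sum>m\<in>{..<k}. \<Sum>u\<in>level_words d m. \<Sum>u'\<in>level_words d m.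
        op_scale (matrix_coeff T u u') (Lword u \<circ> vacuum_proj d \<circ> Lword_adj u'))
   + (\<Sum>u\<in>level_words d k. \<Sum>u'\<in>level_words d k.
        op_scale (matrix_coeff T u u') (Lword u \<circ> Lword_adj u'))"

lemma approx_op_in_star_alg_L: "0 < d \<Longrightarrow> approx_op d T k \<in> star_alg_L d"
  unfolding approx_op_def op_add_eq_plus[symmetric]
  by (intro star_alg_L.add sum_in_star_alg_L finite_level_words star_alg_L.scale star_alg_L.comp
      Lword_in_star_alg_L Lword_adj_in_star_alg_L vacuum_proj_in_star_alg_L)
     (auto simp: mem_level_words)


lemma approx_op_apply_low:
  assumes "f \<in> Fock d" "w \<in> level_words d n" "n < k"
  shows "approx_op d T k f w = (\<Sum>u'\<in>level_words d n. matrix_coeff T w u' * f u')"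
proof -
  have "(\<Sum>u\<in>level_words d m. \<Sum>u'\<in>level_words d m.
           op_scale (matrix_coeff T u u') (Lword u \<circ> vacuum_proj d \<circ> Lword_adj u') f w)
        = (if m = n then (\<Sum>u'\<in>level_words d n. matrix_coeff T w u' * f u') else 0)" for m
  proof -
    have "(\<Sum>u\<in>level_words d m. \<Sum>u'\<in>level_words d m.
             op_scale (matrix_coeff T u u') (Lword u \<circ> vacuum_proj d \<circ> Lword_adj u') f w)
        = (\<Sum>u\<in>level_words d m. if w = u then (\<Sum>u'\<in>level_words d m. matrix_coeff T u u' * f u') else 0)"
      by (intro sum.cong refl)
         (auto simp: op_scale_def rank_one_apply[OF assms(1)] if_distrib cong: if_cong)
    also have "\<dots> = (if m = n then (\<Sum>u'\<in>level_words d n. matrix_coeff T w u' * f u') else 0)"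
      using assms(2) finite_level_words by (auto simp: mem_level_words)
    finally show ?thesis .
  qed
  moreover have "(\<Sum>u\<in>level_words d k. \<Sum>u'\<in>level_words d k.
                    op_scale (matrix_coeff T u u') (Lword u \<circ> Lword_adj u') f w) = 0"
    using assms(2,3) by (intro sum.neutral ballI) (auto simp: op_scale_def shift_apply mem_level_words)
  ultimately show ?thesis
    unfolding approx_op_def using assms(3) by (simp add: sum_op_apply)
qed

lemma approx_op_apply_high:
  assumes "f \<in> Fock d" "w \<in> level_words d n" "k \<le> n"
  shows "approx_op d T k f w
           = (\<Sum>u'\<in>level_words d k. matrix_coeff T (take k w) u' * f (u' @ drop k w))"
proof -
  have low_levels: "(\<Sum>m\<in>{..<k}. \<Sum>u\<in>level_words d m. \<Sum>u'\<in>level_words d m.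
           op_scale (matrix_coeff T u u') (Lword u \<circ> vacuum_proj d \<circ> Lword_adj u') f w) = 0"
    using assms(2,3)
    by (intro sum.neutral ballI) (auto simp: op_scale_def rank_one_apply[OF assms(1)] mem_level_words)
  have prefix: "take k w \<in> level_words d k"
    using assms(2,3) by (auto simp: mem_level_words dest: in_set_takeD)
  have "(\<Sum>u\<in>level_words d k. \<Sum>u'\<in>level_words d k.
           op_scale (matrix_coeff T u u') (Lword u \<circ> Lword_adj u') f w)
      = (\<Sum>u\<in>level_words d k. if take k w = u
           then (\<Sum>u'\<in>level_words d k. matrix_coeff T u u' * f (u' @ drop k w)) else 0)"
    by (intro sum.cong refl) (auto simp: op_scale_def shift_apply mem_level_words)
  also have "\<dots> = (\<Sum>u'\<in>level_words d k. matrix_coeff T (take k w) u' * f (u' @ drop k w))"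
    using prefix finite_level_words by simp
  finally show ?thesis unfolding approx_op_def using low_levels by (simp add: sum_op_apply)
qed

lemma approx_op_vanishes:
  assumes f: "f \<in> Fock d" and w: "w \<notin> words d"
  shows "approx_op d T k f w = 0"
proof -
  have "(\<Sum>m\<in>{..<k}. \<Sum>u\<in>level_words d m. \<Sum>u'\<in>level_words d m.
           op_scale (matrix_coeff T u u') (Lword u \<circ> vacuum_proj d \<circ> Lword_adj u') f w) = 0"
    using w level_words_subset_words
    by (intro sum.neutral ballI) (auto simp: op_scale_def rank_one_apply[OF f])
  moreover have "op_scale (matrix_coeff T u u') (Lword u \<circ> Lword_adj u') f w = 0"
    if "u \<in> level_words d k" "u' \<in> level_words d k" for u u'
  proof (cases "take (length u) w = u")
    case True
    then have "set w = set u \<union> set (drop (length u) w)" by (metis append_take_drop_id set_append)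
    then have "u' @ drop (length u) w \<notin> words d"
      using w that by (auto simp: words_def mem_level_words)
    then show ?thesis by (simp add: op_scale_def shift_apply Fock_vanishes[OF f])
  qed (simp add: op_scale_def shift_apply)
  ultimately show ?thesis unfolding approx_op_def by (simp add: sum_op_apply)
qed

lemma bounded_op_apply_Fock_n:
  assumes T: "bounded_op d T" and g: "g \<in> Fock_n d m"
  shows "T g x = (\<Sum>u'\<in>level_words d m. matrix_coeff T x u' * g u')"
proof -
  have "g = (\<lambda>x. \<Sum>u'\<in>level_words d m. g u' * basis_vec u' x)"
    using Fock_n_vanishes[OF g] finite_level_words
    by (auto simp: basis_vec_def if_distrib fun_eq_iff cong: if_cong)
  then have "T g = T (\<lambda>x. \<Sum>u'\<in>level_words d m. g u' * basis_vec u' x)" by (rule arg_cong)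
  also have "\<dots> = (\<lambda>x. \<Sum>u'\<in>level_words d m. g u' * T (basis_vec u') x)"
    using level_words_subset_words
    by (intro bounded_op_lincomb[OF T finite_level_words] Fock_finite_support[of "{_}"])
       (auto simp: basis_vec_def)
  finally show ?thesis by (simp add: matrix_coeff_def mult.commute)
qed


definition Rword_adj :: "nat list \<Rightarrow> vec \<Rightarrow> vec" where
  "Rword_adj v f = (\<lambda>x. f (x @ v))"

lemma Rword_adj_Fock_n:
  assumes "f \<in> Fock_n d n"
  shows "Rword_adj v f \<in> Fock_n d (n - length v)"
proof -
  have vanishes: "Rword_adj v f x = 0" if "x \<notin> level_words d (n - length v)" for x
  proof -
    have "x @ v \<notin> level_words d n" using that by (auto simp: mem_level_words)
    then show ?thesis using Fock_n_vanishes[OF assms] by (simp add: Rword_adj_def)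
  qed
  then have "Rword_adj v f \<in> Fock d"
    by (intro Fock_finite_support[OF finite_level_words level_words_subset_words])
  then show ?thesis unfolding Fock_n_def using vanishes by (auto simp: mem_level_words)
qed

lemma Rop_adj_Fock_n: "f \<in> Fock_n d (Suc n) \<Longrightarrow> Rop_adj i f \<in> Fock_n d n"
  using Rword_adj_Fock_n[of f d "Suc n" "[i]"] by (simp add: Rword_adj_def Rop_adj_def)

lemma L2_set_fnorm_Rop_adj:
  assumes "f \<in> Fock_n d (Suc n)"
  shows "L2_set (\<lambda>i. fnorm (Rop_adj i f)) {..<d} = fnorm f"
proof -
  have "fnorm (Rop_adj i f) = L2_set (\<lambda>w. cmod (f (w @ [i]))) (level_words d n)" for i
    using fnorm_Fock_n[OF Rop_adj_Fock_n[OF assms]] by (simp add: Rop_adj_def)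
  then show ?thesis by (simp add: fnorm_Fock_n[OF assms] L2_set_level_words_Suc)
qed

lemma approx_op_apply_below:
  assumes "bounded_op d T" "f \<in> Fock_n d n" "w \<in> level_words d n" "n < k"
  shows "approx_op d T k f w = T f w"
  using approx_op_apply_low[OF Fock_n_Fock[OF assms(2)] assms(3,4)]
    bounded_op_apply_Fock_n[OF assms(1,2)] by simp

lemma approx_op_apply_above:
  assumes "bounded_op d T" "f \<in> Fock_n d n" "w \<in> level_words d n" "k \<le> n"
  shows "approx_op d T k f w = T (Rword_adj (drop k w) f) (take k w)"
proof -
  have "Rword_adj (drop k w) f \<in> Fock_n d k"
    using Rword_adj_Fock_n[OF assms(2), of "drop k w"] assms(3,4) by (simp add: mem_level_words)
  then show ?thesis
    using approx_op_apply_high[OF Fock_n_Fock[OF assms(2)] assms(3,4)]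
      bounded_op_apply_Fock_n[OF assms(1)] by (simp add: Rword_adj_def)
qed

section \<open>The error estimate\<close>

definition truncation_error :: "op \<Rightarrow> nat \<Rightarrow> vec \<Rightarrow> nat list \<Rightarrow> complex" where
  "truncation_error T k f w = T f w - T (Rword_adj (drop k w) f) (take k w)"

definition comm_defect :: "nat \<Rightarrow> op \<Rightarrow> nat \<Rightarrow> real" where
  "comm_defect d T n = (\<Sum>i<d. resnorm d (commutator T (Rop_adj i)) n)"

definition defect_tail :: "nat \<Rightarrow> op \<Rightarrow> nat \<Rightarrow> real" where
  "defect_tail d T k = (\<Sum>m. comm_defect d T (m + Suc k))"

lemma comm_defect_nonneg:
  "\<forall>i<d. bounded_op d (commutator T (Rop_adj i)) \<Longrightarrow> comm_defect d T n \<ge> 0"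
  unfolding comm_defect_def by (intro sum_nonneg) (auto intro: resnorm_nonneg)

lemma defect_tail_nonneg:
  "\<forall>i<d. bounded_op d (commutator T (Rop_adj i)) \<Longrightarrow> summable (comm_defect d T) \<Longrightarrow>
   defect_tail d T k \<ge> 0"
  unfolding defect_tail_def by (intro suminf_nonneg comm_defect_nonneg) (simp_all only: summable_iff_shift)

lemma partial_defect_le_defect_tail:
  assumes "\<forall>i<d. bounded_op d (commutator T (Rop_adj i))" "summable (comm_defect d T)"
  shows "(\<Sum>m<j. comm_defect d T (m + Suc k)) \<le> defect_tail d T k"
proof -
  have "summable (\<lambda>m. comm_defect d T (m + Suc k))" using assms(2) by (simp only: summable_iff_shift)
  then show ?thesis
    unfolding defect_tail_def by (rule sum_le_suminf) (auto intro: comm_defect_nonneg[OF assms(1)])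
qed

lemma defect_tail_small:
  assumes "summable (comm_defect d T)" "e > 0"
  obtains k where "defect_tail d T k < e"
proof -
  obtain N where N: "\<forall>n\<ge>N. norm (\<Sum>i. comm_defect d T (i + n)) < e"
    using suminf_exist_split[OF assms(2,1)] by blast
  have "norm (\<Sum>i. comm_defect d T (i + Suc N)) < e" using N[rule_format, of "Suc N"] by simp
  moreover have "defect_tail d T N \<le> norm (\<Sum>i. comm_defect d T (i + Suc N))"
    unfolding defect_tail_def by simp
  ultimately have "defect_tail d T N < e" by linarith
  then show ?thesis by (rule that)
qed

text \<open>Moving the last letter i of w from the argument to the vector costs exactly one commutator
  [T, R_i^*]; iterating this peels w down to its first k letters.\<close>

lemma truncation_error_snoc:
  assumes "k \<le> length w"
  shows "truncation_error T k f (w @ [i])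
           = truncation_error T k (Rop_adj i f) w - commutator T (Rop_adj i) f w"
  using assms
  by (simp add: truncation_error_def commutator_def op_diff_def Rword_adj_def Rop_adj_def)

lemma L2_set_commutators_le:
  assumes D: "\<forall>i<d. bounded_op d (commutator T (Rop_adj i))" and f: "f \<in> Fock_n d (Suc n)"
  shows "L2_set (\<lambda>i. L2_set (\<lambda>w. cmod (commutator T (Rop_adj i) f w)) (level_words d n)) {..<d}
           \<le> comm_defect d T (Suc n) * fnorm f"
proof -
  have "L2_set (\<lambda>i. L2_set (\<lambda>w. cmod (commutator T (Rop_adj i) f w)) (level_words d n)) {..<d}
      \<le> L2_set (\<lambda>i. resnorm d (commutator T (Rop_adj i)) (Suc n) * fnorm f) {..<d}"
  proof (rule L2_set_mono)
    fix i assume "i \<in> {..<d}"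
    then have Di: "bounded_op d (commutator T (Rop_adj i))" using D by simp
    show "L2_set (\<lambda>w. cmod (commutator T (Rop_adj i) f w)) (level_words d n)
        \<le> resnorm d (commutator T (Rop_adj i)) (Suc n) * fnorm f"
      using L2_set_le_fnorm[OF bounded_op_Fock[OF Di Fock_n_Fock[OF f]] finite_level_words[of d n]]
        resnorm_bound[OF Di f] by linarith
  qed simp
  also have "\<dots> \<le> (\<Sum>i<d. resnorm d (commutator T (Rop_adj i)) (Suc n) * fnorm f)"
    using D by (intro L2_set_le_sum) (auto intro: mult_nonneg_nonneg resnorm_nonneg fnorm_nonneg)
  also have "\<dots> = comm_defect d T (Suc n) * fnorm f"
    unfolding comm_defect_def by (simp add: sum_distrib_right)
  finally show ?thesis .
qed

lemma truncation_error_bound: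
  assumes D: "\<forall>i<d. bounded_op d (commutator T (Rop_adj i))"
  shows "f \<in> Fock_n d (k + j) \<Longrightarrow>
    L2_set (\<lambda>w. cmod (truncation_error T k f w)) (level_words d (k + j))
      \<le> (\<Sum>m<j. comm_defect d T (m + Suc k)) * fnorm f"
proof (induction j arbitrary: f)
  case 0
  then show ?case
    by (simp add: truncation_error_def Rword_adj_def mem_level_words L2_set_0')
next
  case (Suc j)
  define n where "n = k + j"
  define S where "S = (\<Sum>m<j. comm_defect d T (m + Suc k))"
  have f: "f \<in> Fock_n d (Suc n)" using Suc.prems by (simp add: n_def)
  have S: "S \<ge> 0" unfolding S_def using D by (intro sum_nonneg comm_defect_nonneg)
  let ?err = "\<lambda>i. L2_set (\<lambda>w. cmod (truncation_error T k (Rop_adj i f) w)) (level_words d n)"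
  let ?comm = "\<lambda>i. L2_set (\<lambda>w. cmod (commutator T (Rop_adj i) f w)) (level_words d n)"
  have "L2_set (\<lambda>w. cmod (truncation_error T k f w)) (level_words d (Suc n))
      = L2_set (\<lambda>i. L2_set (\<lambda>w. cmod (truncation_error T k f (w @ [i]))) (level_words d n)) {..<d}"
    by (rule L2_set_level_words_Suc)
  also have "\<dots> \<le> L2_set (\<lambda>i. ?err i + ?comm i) {..<d}"
  proof (rule L2_set_mono)
    fix i
    have "L2_set (\<lambda>w. cmod (truncation_error T k f (w @ [i]))) (level_words d n)
        \<le> L2_set (\<lambda>w. cmod (truncation_error T k (Rop_adj i f) w)
                     + cmod (commutator T (Rop_adj i) f w)) (level_words d n)"
      by (rule L2_set_mono)
         (auto simp: truncation_error_snoc mem_level_words n_def norm_triangle_ineq4)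
    also have "\<dots> \<le> ?err i + ?comm i" by (rule L2_set_triangle_ineq)
    finally show "L2_set (\<lambda>w. cmod (truncation_error T k f (w @ [i]))) (level_words d n)
        \<le> ?err i + ?comm i" .
  qed simp
  also have "\<dots> \<le> L2_set ?err {..<d} + L2_set ?comm {..<d}" by (rule L2_set_triangle_ineq)
  also have "L2_set ?err {..<d} \<le> S * fnorm f"
  proof -
    have "L2_set ?err {..<d} \<le> L2_set (\<lambda>i. S * fnorm (Rop_adj i f)) {..<d}"
      using Suc.IH Rop_adj_Fock_n[OF f] by (intro L2_set_mono) (simp_all add: S_def n_def)
    also have "\<dots> = S * fnorm f"
      using L2_set_right_distrib[OF S] L2_set_fnorm_Rop_adj[OF f] by metis
    finally show ?thesis .
  qed
  also have "L2_set ?comm {..<d} \<le> comm_defect d T (Suc n) * fnorm f"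
    by (rule L2_set_commutators_le[OF D f])
  finally show ?case by (simp add: S_def n_def algebra_simps)
qed

lemma approx_op_level_error:
  assumes T: "bounded_op d T" and D: "\<forall>i<d. bounded_op d (commutator T (Rop_adj i))"
    and summable: "summable (comm_defect d T)" and f: "f \<in> Fock_n d n"
  shows "L2_set (\<lambda>w. cmod (T f w - approx_op d T k f w)) (level_words d n)
           \<le> defect_tail d T k * fnorm f"
proof (cases "n < k")
  case True
  then have "L2_set (\<lambda>w. cmod (T f w - approx_op d T k f w)) (level_words d n) = 0"
    using approx_op_apply_below[OF T f] by (simp add: L2_set_0')
  then show ?thesis
    using defect_tail_nonneg[OF D summable] fnorm_nonneg[of f] by simp
next
  case False
  then obtain j where n: "n = k + j" by (metis le_add_diff_inverse not_less)
  have "L2_set (\<lambda>w. cmod (T f w - approx_op d T k f w)) (level_words d n)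
      = L2_set (\<lambda>w. cmod (truncation_error T k f w)) (level_words d (k + j))"
    using approx_op_apply_above[OF T f] n
    by (intro L2_set_cong) (auto simp: truncation_error_def)
  also have "\<dots> \<le> (\<Sum>m<j. comm_defect d T (m + Suc k)) * fnorm f"
    using f n by (intro truncation_error_bound[OF D]) simp
  also have "\<dots> \<le> defect_tail d T k * fnorm f"
    by (intro mult_right_mono partial_defect_le_defect_tail[OF D summable] fnorm_nonneg)
  finally show ?thesis .
qed

lemma approx_op_error:
  assumes T: "bounded_op d T" "block_diagonal d T"
    and D: "\<forall>i<d. bounded_op d (commutator T (Rop_adj i))"
    and summable: "summable (comm_defect d T)" and f: "f \<in> Fock d"
  shows "fnorm (op_diff T (approx_op d T k) f) \<le> defect_tail d T k * fnorm f"
proof (rule fnorm_le_levelwise[OF f _ defect_tail_nonneg[OF D summable]])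
  fix w assume "w \<notin> words d"
  then show "op_diff T (approx_op d T k) f w = 0"
    using approx_op_vanishes[OF f] Fock_vanishes[OF bounded_op_Fock[OF T(1) f]]
    by (simp add: op_diff_def)
next
  fix n
  have proj: "level_proj n f \<in> Fock_n d n" by (rule level_proj_Fock_n[OF f])
  have "op_diff T (approx_op d T k) f w = T (level_proj n f) w - approx_op d T k (level_proj n f) w"
    if w: "w \<in> level_words d n" for w
  proof -
    have "approx_op d T k f w = approx_op d T k (level_proj n f) w"
    proof (cases "n < k")
      case True
      then show ?thesis
        using approx_op_apply_low[OF _ w True] f Fock_n_Fock[OF proj]
        by (auto simp: level_proj_def mem_level_words intro!: sum.cong)
    next
      case False
      then show ?thesis
        using approx_op_apply_high[OF _ w] f Fock_n_Fock[OF proj] w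
        by (auto simp: level_proj_def mem_level_words intro!: sum.cong)
    qed
    then show ?thesis
      using block_diagonal_level_proj[OF T f] w by (simp add: op_diff_def mem_level_words)
  qed
  then have "L2_set (\<lambda>w. cmod (op_diff T (approx_op d T k) f w)) (level_words d n)
      = L2_set (\<lambda>w. cmod (T (level_proj n f) w - approx_op d T k (level_proj n f) w)) (level_words d n)"
    by (intro L2_set_cong) simp_all
  also have "\<dots> \<le> defect_tail d T k * fnorm (level_proj n f)"
    by (rule approx_op_level_error[OF T(1) D summable proj])
  finally show "L2_set (\<lambda>w. cmod (op_diff T (approx_op d T k) f w)) (level_words d n)
      \<le> defect_tail d T k * L2_set (\<lambda>w. cmod (f w)) (level_words d n)"
    by (simp add: fnorm_level_proj[OF f])
qed

theorem corollary3p6: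
  fixes d :: nat and T :: op
  assumes "d \<ge> 2"
    and "bounded_op d T"
    and "block_diagonal d T"
    and "\<forall>i<d. commutator T (Rop_adj i) \<in> classS d"
  shows "T \<in> CstarL d"
proof -
  have D: "\<forall>i<d. bounded_op d (commutator T (Rop_adj i))"
    using assms(4) by (simp add: classS_def)
  have summable: "summable (comm_defect d T)"
    unfolding comm_defect_def using assms(4) by (intro summable_sum) (simp add: classS_def)
  have "\<exists>P\<in>star_alg_L d. opnorm d (op_diff T P) < e" if "e > 0" for e
  proof -
    obtain k where k: "defect_tail d T k < e"
      using defect_tail_small[OF summable \<open>e > 0\<close>] by blast
    have "opnorm d (op_diff T (approx_op d T k)) \<le> defect_tail d T k"
      using approx_op_error[OF assms(2,3) D summable]
      by (intro opnorm_le defect_tail_nonneg[OF D summable])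
    moreover have "approx_op d T k \<in> star_alg_L d"
      using assms(1) by (intro approx_op_in_star_alg_L) simp
    ultimately show ?thesis using k by force
  qed
  then show ?thesis unfolding CstarL_def using assms(2) by blast
qed

end
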